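(* Let $k$ be a field, let $p\ge1$, and let $n_0<n_1<\cdots<n_p$ be positive integers with $n_i=n_0+id$ for a fixed positive integer $d$, such that $\gcd(n_0,\dots,n_p)=1$ and $\{n_0,\dots,n_p\}$ minimally generates the numerical semigroup $\langle n_0,\dots,n_p\rangle$. Let $S=\langle (0,n_p),(n_0,n_p-n_0),(n_1,n_p-n_1),\dots,(n_{p-1},n_p-n_{p-1}),(n_p,0)\rangle\subseteq\mathbb{N}^2$. Then \[e_{\mathrm{HK}}(k[S])=n_0+\frac{p(p+1)d^2}{2n_p}.\]
   Context: $k[S]=\bigoplus_{(s_1,s_2)\in S}k\,t^{s_1}u^{s_2}\subseteq k[t,u]$ is the semigroup ring of $S$, a graded $k$-algebra of dimension $2$ with homogeneous maximal ideal $\mathfrak{m}$ generated by the monomials $t^{s_1}u^{s_2}$ for the listed generators $(s_1,s_2)$ of $S$. For a $D$-dimensional graded $k$-algebra $R$ with homogeneous maximal ideal $\mathfrak{m}=\langle x_1,\dots,x_s\rangle$, set $\mathfrak{m}^{[n]}=\langle x_1^n,\dots,x_s^n\rangle$; the Hilbert–Kunz multiplicity is $e_{\mathrm{HK}}(R)=\lim_{n\to\infty}\ell_R(R/\mathfrak{m}^{[n]})/n^{D}$ (in positive characteristic $q$, taken along $n=q^e$). *)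

theory Defs
  imports Complex_Main
begin

definition num_sg :: "nat set \<Rightarrow> nat set" where
  "num_sg A = {x. \<exists>c::nat \<Rightarrow> nat. x = (\<Sum>a\<in>A. c a * a)}"

definition minimally_generates :: "nat set \<Rightarrow> bool" where
  "minimally_generates A \<longleftrightarrow> (\<forall>a\<in>A. a \<notin> num_sg (A - {a}))"

definition aff_sg :: "(nat \<times> nat) set \<Rightarrow> (nat \<times> nat) set" where
  "aff_sg G = {x. \<exists>c::nat \<times> nat \<Rightarrow> nat.
      x = ((\<Sum>g\<in>G. c g * fst g), (\<Sum>g\<in>G. c g * snd g))}"

text \<open>Length of k[S]/m^[n], where m is generated by the monomials t^a u^b for
  (a,b) in G and S = aff_sg G: since m^[n] is a monomial ideal, this length is the
  k-dimension of the quotient, i.e. the number of elements of S not lying in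
  any translate n*g + S (g in G). It does not depend on the field k.\<close>
definition hk_length :: "(nat \<times> nat) set \<Rightarrow> nat \<Rightarrow> nat" where
  "hk_length G n = card {s \<in> aff_sg G. \<forall>g\<in>G. \<forall>t\<in>aff_sg G.
      s \<noteq> (n * fst g + fst t, n * snd g + snd t)}"

definition has_eHK2 :: "(nat \<times> nat) set \<Rightarrow> real \<Rightarrow> bool" where
  "has_eHK2 G L \<longleftrightarrow> (\<lambda>n. real (hk_length G n) / real n ^ 2) \<longlonglongrightarrow> L"

end

theory Submission
  imports Defs "HOL-Number_Theory.Cong" "HOL-Real_Asymp.Real_Asymp"
begin

(* Let N = n_p. The semigroup S consists of the points (x, y) with N | x + y, x in the numerical
   semigroup T generated by n_0, ..., n_p and y in the numerical semigroup U generated by N and d.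
   A monomial of S outside m^[n] lies below the staircase whose outer corners are the points n g,
   g a generator of S. Conversely, T and U contain every integer beyond a fixed bound, so all
   lattice points below the staircase, apart from two strips of bounded width, lie in S and are
   outside m^[n]. Counted column by column, the lattice N | x + y has h / N + O(1) points in a
   column of height h, and the staircase has area n^2 (n_0 N + p (p + 1) d^2 / 2); hence the
   length of k[S]/m^[n] is e_HK n^2 + O(n). *)

lemma coprime_nat_combination:
  fixes u v y :: nat
  assumes "coprime u v" and "0 < v" and "u * v \<le> y"
  shows "\<exists>a b. a < v \<and> y = a * u + b * v"
proof -
  obtain w where w: "[u * w = 1] (mod v)" using cong_solve_coprime_nat[OF assms(1)] by auto
  define a where "a = (w * y) mod v"
  have "[a * u = y * (u * w)] (mod v)"
    unfolding a_def Cong.cong_def mod_mult_left_eq by (simp add: ac_simps)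
  also have "[y * (u * w) = y] (mod v)" using cong_scalar_left[OF w, of y] by simp
  finally have "[y = a * u] (mod v)" by (rule cong_sym)
  moreover have "a < v" using assms(2) by (simp add: a_def)
  moreover have "a * u \<le> y" using \<open>a < v\<close> assms(3) by (metis less_imp_le_nat mult_le_mono1 mult.commute le_trans)
  ultimately show ?thesis by (metis add.commute cong_le_nat)
qed

lemma aff_sg_zero: "(0, 0) \<in> aff_sg G"
  unfolding aff_sg_def by (auto intro: exI[of _ "\<lambda>_. 0"])

lemma aff_sg_add:
  assumes "(x1, y1) \<in> aff_sg G" and "(x2, y2) \<in> aff_sg G"
  shows "(x1 + x2, y1 + y2) \<in> aff_sg G"
proof -
  obtain c1 c2 where "x1 = (\<Sum>g\<in>G. c1 g * fst g)" "y1 = (\<Sum>g\<in>G. c1 g * snd g)"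
    and "x2 = (\<Sum>g\<in>G. c2 g * fst g)" "y2 = (\<Sum>g\<in>G. c2 g * snd g)"
    using assms unfolding aff_sg_def by auto
  then show ?thesis
    unfolding aff_sg_def by (auto simp: sum.distrib distrib_right intro!: exI[of _ "\<lambda>g. c1 g + c2 g"])
qed

lemma aff_sg_scale:
  assumes "(x, y) \<in> aff_sg G"
  shows "(k * x, k * y) \<in> aff_sg G"
proof -
  obtain c where "x = (\<Sum>g\<in>G. c g * fst g)" "y = (\<Sum>g\<in>G. c g * snd g)"
    using assms unfolding aff_sg_def by auto
  then show ?thesis
    unfolding aff_sg_def by (auto simp: sum_distrib_left mult.assoc intro!: exI[of _ "\<lambda>g. k * c g"])
qed

lemma aff_sg_generator:
  assumes "finite G" and "g \<in> G"
  shows "g \<in> aff_sg G"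
proof -
  have "(\<Sum>h\<in>G. (if h = g then 1 else 0) * f h) = f g" for f :: "nat \<times> nat \<Rightarrow> nat"
  proof -
    have "(\<Sum>h\<in>G. (if h = g then 1 else 0) * f h) = (\<Sum>h\<in>G. if h = g then f h else 0)"
      by (rule sum.cong) auto
    then show ?thesis using assms by simp
  qed
  then show ?thesis
    unfolding aff_sg_def by (auto intro!: exI[of _ "\<lambda>h. if h = g then 1 else 0"])
qed

lemma aff_sg_minimal:
  assumes "finite G" and "G \<subseteq> A" and "(0, 0) \<in> A"
    and "\<And>x1 y1 x2 y2. (x1, y1) \<in> A \<Longrightarrow> (x2, y2) \<in> A \<Longrightarrow> (x1 + x2, y1 + y2) \<in> A"
  shows "aff_sg G \<subseteq> A"
proof -
  have scale: "(k * x, k * y) \<in> A" if "(x, y) \<in> A" for k x y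
  proof (induction k)
    case (Suc k)
    then show ?case using assms(4)[OF that Suc] by simp
  qed (simp add: assms(3))
  have "((\<Sum>g\<in>H. c g * fst g), (\<Sum>g\<in>H. c g * snd g)) \<in> A" if "H \<subseteq> G" for H c
    using finite_subset[OF that assms(1)] that
  proof (induction H rule: finite_induct)
    case (insert g H)
    then have "(c g * fst g, c g * snd g) \<in> A" using assms(2) scale[of "fst g" "snd g"] by auto
    with insert show ?case using assms(4) by simp
  qed (simp add: assms(3))
  then show ?thesis unfolding aff_sg_def by blast
qed

lemma card_multiples_less:
  fixes N M :: nat
  assumes "0 < N"
  shows "card {z. z < M \<and> N dvd z} = (M + N - 1) div N"
proof -
  have "{z. z < M \<and> N dvd z} = (\<lambda>t. t * N) ` {..<(M + N - 1) div N}"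
  proof (intro set_eqI iffI)
    fix z assume "z \<in> {z. z < M \<and> N dvd z}"
    then obtain t where "z = t * N" "t * N < M" by (metis dvdE mult.commute mem_Collect_eq)
    then show "z \<in> (\<lambda>t. t * N) ` {..<(M + N - 1) div N}"
      using assms by (auto simp: less_eq_div_iff_mult_less_eq Suc_le_eq[symmetric])
  qed (use assms in \<open>auto simp: less_eq_div_iff_mult_less_eq Suc_le_eq[symmetric]\<close>)
  moreover have "inj_on (\<lambda>t. t * N) A" for A using assms by (auto intro: inj_onI)
  ultimately show ?thesis by (simp add: card_image)
qed

lemma mult_div_ceiling_bounds:
  fixes N M :: nat
  assumes "0 < N"
  shows "M \<le> N * ((M + N - 1) div N)" and "N * ((M + N - 1) div N) \<le> M + N - 1"
proof -
  have "N * ((M + N - 1) div N) + (M + N - 1) mod N = M + N - 1" by simp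
  moreover have "(M + N - 1) mod N < N" using assms by simp
  ultimately show "M \<le> N * ((M + N - 1) div N)" and "N * ((M + N - 1) div N) \<le> M + N - 1"
    by linarith+
qed

lemma card_residue_class_bounds:
  fixes N h x :: nat
  assumes "0 < N"
  shows "h < N * card {y. y < h \<and> N dvd (x + y)} + N"
    and "N * card {y. y < h \<and> N dvd (x + y)} < h + N"
proof -
  let ?mult = "\<lambda>M. {z. z < M \<and> N dvd z}"
  have "{y. y < h \<and> N dvd (x + y)} = (\<lambda>z. z - x) ` (?mult (x + h) - ?mult x)"
    by (auto simp: image_iff intro!: bexI[where x = "x + _"])
  moreover have "inj_on (\<lambda>z. z - x) (?mult (x + h) - ?mult x)" by (auto intro: inj_onI)
  ultimately have "card {y. y < h \<and> N dvd (x + y)} = card (?mult (x + h)) - card (?mult x)"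
    by (simp add: card_image card_Diff_subset subset_eq)
  also have "\<dots> = (x + h + N - 1) div N - (x + N - 1) div N"
    using assms by (simp add: card_multiples_less)
  finally have "N * card {y. y < h \<and> N dvd (x + y)} = N * ((x + h + N - 1) div N) - N * ((x + N - 1) div N)"
    by (simp add: diff_mult_distrib2)
  with mult_div_ceiling_bounds[OF assms, of "x + h"] mult_div_ceiling_bounds[OF assms, of x]
  show "h < N * card {y. y < h \<and> N dvd (x + y)} + N"
    and "N * card {y. y < h \<and> N dvd (x + y)} < h + N"
    using assms by linarith+
qed

lemma LIMSEQ_divide_square:
  fixes a :: "nat \<Rightarrow> real"
  assumes "\<And>n. \<bar>a n - L * real n ^ 2\<bar> \<le> B * real n + C"
  shows "(\<lambda>n. a n / real n ^ 2) \<longlonglongrightarrow> L"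
proof (rule LIM_zero_cancel, rule tendsto_0_le)
  show "(\<lambda>n. B / real n + C / real n ^ 2) \<longlonglongrightarrow> 0"
    by real_asymp
  show "\<forall>\<^sub>F n in sequentially. norm (a n / real n ^ 2 - L) \<le> norm (B / real n + C / real n ^ 2) * 1"
  proof (rule eventually_sequentiallyI[of 1])
    fix n :: nat assume "1 \<le> n"
    then have "a n / real n ^ 2 - L = (a n - L * real n ^ 2) / real n ^ 2"
      by (simp add: field_simps)
    also have "\<bar>\<dots>\<bar> \<le> (B * real n + C) / real n ^ 2"
      using assms[of n] by (simp add: abs_divide divide_right_mono)
    also have "\<dots> = B / real n + C / real n ^ 2"
      using \<open>1 \<le> n\<close> by (simp add: add_divide_distrib power2_eq_square)
    finally show "norm (a n / real n ^ 2 - L) \<le> norm (B / real n + C / real n ^ 2) * 1"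
      by simp
  qed
qed

lemma double_sum_lessThan_diff: "2 * (\<Sum>i<q. q - i) = q * (q + 1)" for q :: nat
proof -
  have "(\<Sum>i<q. q - i) = (\<Sum>i<q. Suc i)"
    using sum.nat_diff_reindex[of Suc q] by (simp add: Suc_diff_Suc)
  moreover have "2 * (\<Sum>i<q. Suc i) = q * Suc q"
    by (induction q) auto
  ultimately show ?thesis by simp
qed

locale arith_seq_projective_closure =
  fixes n0 d p :: nat
  assumes p_pos: "1 \<le> p" and n0_pos: "0 < n0" and d_pos: "0 < d" and coprime: "coprime n0 d"
begin

definition N :: nat where "N = n0 + p * d"

definition gens :: "(nat \<times> nat) set" where
  "gens = insert (0, N) ((\<lambda>i. (n0 + i * d, N - (n0 + i * d))) ` {0..p})"

text \<open>\<open>T\<close> is the numerical semigroup generated by \<open>n\<^sub>0, \<dots>, n\<^sub>p\<close> (a sum of \<open>j\<close> generators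
  is \<open>j n\<^sub>0 + m d\<close> with \<open>m \<le> j p\<close>) and \<open>U\<close> the one generated by \<open>n\<^sub>p\<close> and \<open>d\<close>.\<close>

definition T :: "nat set" where "T = {j * n0 + m * d | j m. m \<le> j * p}"

definition U :: "nat set" where "U = {a * N + b * d | a b. True}"

definition S :: "(nat \<times> nat) set" where "S = {(x, y). x \<in> T \<and> y \<in> U \<and> N dvd (x + y)}"

lemma N_pos: "0 < N"
  using n0_pos by (simp add: N_def)

lemma gens_cases:
  assumes "g \<in> gens"
  obtains "g = (0, N)" | i where "i \<le> p" "g = (n0 + i * d, (p - i) * d)"
proof -
  have "N - (n0 + i * d) = (p - i) * d" for i
    by (simp add: N_def diff_mult_distrib)
  then show thesis using assms that unfolding gens_def by auto
qed

lemma step_mem_gens: "i \<le> p \<Longrightarrow> (n0 + i * d, (p - i) * d) \<in> gens"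
proof -
  assume "i \<le> p"
  moreover have "N - (n0 + i * d) = (p - i) * d"
    by (simp add: N_def diff_mult_distrib)
  ultimately show ?thesis unfolding gens_def by (intro insertI2 image_eqI[where x = i]) auto
qed

lemma top_mem_gens: "(0, N) \<in> gens" and last_mem_gens: "(N, 0) \<in> gens"
  using step_mem_gens[of p] by (simp_all add: gens_def N_def)

lemma finite_gens: "finite gens"
  by (simp add: gens_def)

lemma T_add:
  assumes "x1 \<in> T" and "x2 \<in> T"
  shows "x1 + x2 \<in> T"
proof -
  obtain j1 m1 j2 m2 where "m1 \<le> j1 * p" "x1 = j1 * n0 + m1 * d" "m2 \<le> j2 * p" "x2 = j2 * n0 + m2 * d"
    using assms unfolding T_def by blast
  then have "m1 + m2 \<le> (j1 + j2) * p \<and> x1 + x2 = (j1 + j2) * n0 + (m1 + m2) * d"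
    by (simp add: algebra_simps)
  then show ?thesis unfolding T_def by blast
qed

lemma U_add:
  assumes "y1 \<in> U" and "y2 \<in> U"
  shows "y1 + y2 \<in> U"
proof -
  obtain a1 b1 a2 b2 where "y1 = a1 * N + b1 * d" "y2 = a2 * N + b2 * d"
    using assms unfolding U_def by blast
  then have "y1 + y2 = (a1 + a2) * N + (b1 + b2) * d"
    by (simp add: algebra_simps)
  then show ?thesis unfolding U_def by blast
qed

lemma S_add:
  assumes "(x1, y1) \<in> S" and "(x2, y2) \<in> S"
  shows "(x1 + x2, y1 + y2) \<in> S"
proof -
  have "N dvd (x1 + y1) + (x2 + y2)"
    using assms unfolding S_def by (simp add: dvd_add)
  then have "N dvd (x1 + x2) + (y1 + y2)"
    by (simp add: ac_simps)
  then show ?thesis using assms unfolding S_def by (auto intro: T_add U_add)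
qed

lemma gens_subset_S: "gens \<subseteq> S"
proof
  fix g assume "g \<in> gens"
  then show "g \<in> S"
  proof (cases rule: gens_cases)
    case 1
    have "0 \<in> T" unfolding T_def by force
    moreover have "N \<in> U" unfolding U_def by (force intro: exI[of _ 1])
    ultimately show ?thesis by (simp add: S_def 1)
  next
    case (2 i)
    have "n0 + i * d \<in> T" unfolding T_def using 2 by (force intro: exI[of _ 1])
    moreover have "(p - i) * d = 0 * N + (p - i) * d" by simp
    then have "(p - i) * d \<in> U" unfolding U_def by blast
    moreover have "n0 + i * d + (p - i) * d = N"
      using 2 by (simp add: N_def add_mult_distrib[symmetric])
    ultimately show ?thesis by (simp add: S_def 2)
  qed
qed

lemma sum_of_steps_mem_aff_sg:
  "m \<le> j * p \<Longrightarrow> (j * n0 + m * d, (j * p - m) * d) \<in> aff_sg gens"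
proof (induction j arbitrary: m)
  case 0
  then show ?case using aff_sg_zero by simp
next
  case (Suc j)
  define i where "i = min m p"
  have "i \<le> p" "i \<le> m" "m - i \<le> j * p"
    using Suc.prems by (auto simp: i_def min_def)
  have "(j * n0 + (m - i) * d + (n0 + i * d), (j * p - (m - i)) * d + (p - i) * d) \<in> aff_sg gens"
    using aff_sg_add[OF Suc.IH[OF \<open>m - i \<le> j * p\<close>] aff_sg_generator[OF finite_gens step_mem_gens]]
      \<open>i \<le> p\<close> by simp
  moreover have "j * n0 + (m - i) * d + (n0 + i * d) = Suc j * n0 + m * d"
    using \<open>i \<le> m\<close> by (simp add: add_mult_distrib[symmetric])
  moreover have "(j * p - (m - i)) * d + (p - i) * d = (Suc j * p - m) * d"
    using \<open>i \<le> p\<close> \<open>i \<le> m\<close> \<open>m - i \<le> j * p\<close> by (simp add: add_mult_distrib[symmetric] add.commute)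
  ultimately show ?case by simp
qed

lemma param_mem_aff_sg:
  assumes "m \<le> j * p"
  shows "(j * n0 + m * d, a * N + (j * p - m) * d) \<in> aff_sg gens"
  using aff_sg_add[OF aff_sg_scale[OF aff_sg_generator[OF finite_gens top_mem_gens], of a]
      sum_of_steps_mem_aff_sg[OF assms]]
  by simp

lemma S_param:
  assumes "(x, y) \<in> S"
  obtains j m a where "m \<le> j * p" "x = j * n0 + m * d" "y = a * N + (j * p - m) * d"
proof -
  (* With x = j n0 + m d, y = a N + b d and x + y = k N: if j + a <= k, then
     y = (k - j) N + (j p - m) d; otherwise x = (k - a) n0 + ((k - a) p - b) d. *)
  obtain j m where jm: "m \<le> j * p" "x = j * n0 + m * d"
    using assms unfolding S_def T_def by blast
  obtain a b where ab: "y = a * N + b * d"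
    using assms unfolding S_def U_def by blast
  have "N dvd x + y" using assms by (simp add: S_def)
  then obtain k where k: "x + y = k * N" by (metis dvdE mult.commute)
  have eq: "int x + int y = int k * (int n0 + int p * int d)"
    using arg_cong[OF k, of int] by (simp add: N_def)
  show thesis
  proof (cases "j + a \<le> k")
    case True
    have "int y = (int k - int j) * int N + (int j * int p - int m) * int d"
      using eq jm(2) unfolding N_def by (simp add: algebra_simps)
    also have "\<dots> = int ((k - j) * N + (j * p - m) * d)"
      using True jm(1) by (simp add: of_nat_diff)
    finally have "y = (k - j) * N + (j * p - m) * d" by (simp only: of_nat_eq_iff)
    with jm show thesis by (rule that)
  next
    case False
    have "a * N \<le> k * N" using k ab by (metis add_leE le_add2)
    then have "a \<le> k" using N_pos by simp
    have "(int k - int a - int j) * int n0 = (int m + int b - (int k - int a) * int p) * int d"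
      using eq jm(2) ab unfolding N_def by (simp add: algebra_simps)
    moreover have "(int k - int a - int j) * int n0 < 0"
      using False n0_pos by (simp add: mult_neg_pos)
    ultimately have "int m + int b - (int k - int a) * int p < 0"
      using d_pos by (simp add: mult_less_0_iff)
    then have "int b \<le> int ((k - a) * p)"
      using \<open>a \<le> k\<close> by (simp add: of_nat_diff)
    then have b: "b \<le> (k - a) * p" by (simp only: of_nat_le_iff)
    have "int x = (int k - int a) * int n0 + ((int k - int a) * int p - int b) * int d"
      using eq ab unfolding N_def by (simp add: algebra_simps)
    also have "\<dots> = int ((k - a) * n0 + ((k - a) * p - b) * d)"
      using \<open>a \<le> k\<close> b by (simp add: of_nat_diff)
    finally have "x = (k - a) * n0 + ((k - a) * p - b) * d" by (simp only: of_nat_eq_iff)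
    moreover have "y = a * N + ((k - a) * p - ((k - a) * p - b)) * d"
      using ab b by simp
    ultimately show thesis using that[of "(k - a) * p - b" "k - a" a] by simp
  qed
qed

lemma aff_sg_gens: "aff_sg gens = S"
proof
  show "aff_sg gens \<subseteq> S"
  proof (rule aff_sg_minimal[OF finite_gens gens_subset_S])
    show "(0, 0) \<in> S"
      unfolding S_def T_def U_def by force
  qed (fact S_add)
  show "S \<subseteq> aff_sg gens"
    by (auto elim: S_param intro: param_mem_aff_sg)
qed

lemma mem_T_if_ge:
  assumes "n0 * (n0 + d) \<le> x"
  shows "x \<in> T"
proof -
  obtain m j where "m < n0" and x: "x = m * d + j * n0"
    using coprime_nat_combination[of d n0 x] coprime n0_pos assms
    by (auto simp: coprime_commute algebra_simps)
  have "m * d < n0 * d" using \<open>m < n0\<close> d_pos by simp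
  moreover have "n0 * n0 + n0 * d \<le> m * d + j * n0"
    using assms x by (simp add: distrib_left)
  ultimately have "n0 * n0 < j * n0" by linarith
  then have "m < j" using \<open>m < n0\<close> by simp
  moreover have "j \<le> j * p" using p_pos by simp
  ultimately have "m \<le> j * p" by linarith
  then show "x \<in> T"
    unfolding T_def x by (auto simp: add.commute)
qed

lemma mem_U_if_ge: "N * d \<le> y \<Longrightarrow> y \<in> U"
proof -
  assume "N * d \<le> y"
  moreover have "gcd d (p * d + n0) = gcd d n0" by (rule gcd_add_mult)
  then have "coprime N d"
    using coprime by (simp add: N_def coprime_iff_gcd_eq_1 gcd.commute add.commute)
  ultimately obtain a b where "y = a * N + b * d"
    using coprime_nat_combination[of N d y] d_pos by auto
  then show "y \<in> U" unfolding U_def by blast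
qed

lemma gens_fst_plus_snd: "g \<in> gens \<Longrightarrow> fst g + snd g = N"
  by (elim gens_cases) (auto simp: N_def add_mult_distrib[symmetric])

definition basis :: "nat \<Rightarrow> (nat \<times> nat) set" where
  "basis n = {s \<in> S. \<forall>g\<in>gens. \<forall>t\<in>S. s \<noteq> (n * fst g + fst t, n * snd g + snd t)}"

lemma hk_length_eq_card_basis: "hk_length gens n = card (basis n)"
  by (simp add: hk_length_def basis_def aff_sg_gens)

lemma not_mem_basis:
  assumes "(x, y) \<in> S" and "g \<in> gens" and "n * fst g \<le> x" and "n * snd g \<le> y"
    and "x - n * fst g \<in> T" and "y - n * snd g \<in> U"
  shows "(x, y) \<notin> basis n"
proof -
  have "x - n * fst g + (y - n * snd g) = (x + y) - n * N"
    using assms(3,4) gens_fst_plus_snd[OF assms(2)] by (simp add: add_mult_distrib2[symmetric])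
  then have "N dvd x - n * fst g + (y - n * snd g)"
    using assms(1) by (simp add: S_def dvd_diff_nat)
  then have "(x - n * fst g, y - n * snd g) \<in> S"
    using assms(5,6) by (simp add: S_def)
  then show ?thesis
    using assms(2-4) unfolding basis_def by force
qed

text \<open>The lattice points with \<open>N | x + y\<close> below the staircase with outer corners \<open>n g + (c, c)\<close>,
  \<open>g \<in> gens\<close>. Its points in \<open>S\<close> for \<open>c = 0\<close> lie in \<open>basis n\<close>, and \<open>c = margin\<close>, which bounds the
  conductors of \<open>T\<close> and \<open>U\<close>, makes it contain all of \<open>basis n\<close>.\<close>

definition height :: "nat \<Rightarrow> nat \<Rightarrow> nat \<Rightarrow> nat" where
  "height n c x = Min (insert (n * N + c) ((\<lambda>g. n * snd g + c) ` {g \<in> gens. n * fst g + c \<le> x}))"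

definition staircase :: "nat \<Rightarrow> nat \<Rightarrow> (nat \<times> nat) set" where
  "staircase n c = {(x, y). x < n * N + c \<and> y < height n c x \<and> N dvd (x + y)}"

lemma less_height_iff:
  "y < height n c x \<longleftrightarrow> y < n * N + c \<and> (\<forall>g\<in>gens. n * fst g + c \<le> x \<longrightarrow> y < n * snd g + c)"
  using finite_gens by (auto simp: height_def)

definition margin :: nat where "margin = n0 * (n0 + d) + N * d"

lemma basis_subset_staircase: "basis n \<subseteq> staircase n margin"
proof safe
  fix x y assume xy: "(x, y) \<in> basis n"
  then have "(x, y) \<in> S" by (simp add: basis_def)
  then have "x \<in> T" "y \<in> U" "N dvd x + y" by (simp_all add: S_def)
  have T: "x - a \<in> T" if "a + margin \<le> x" for a
    using that by (intro mem_T_if_ge) (simp add: margin_def)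
  have U: "y - b \<in> U" if "b + margin \<le> y" for b
    using that by (intro mem_U_if_ge) (simp add: margin_def)
  have "x < n * N + margin"
  proof (rule ccontr)
    assume "\<not> ?thesis"
    then show False
      using not_mem_basis[OF \<open>(x, y) \<in> S\<close> last_mem_gens] T[of "n * N"] \<open>y \<in> U\<close> xy by simp
  qed
  moreover have "y < n * N + margin"
  proof (rule ccontr)
    assume "\<not> ?thesis"
    then show False
      using not_mem_basis[OF \<open>(x, y) \<in> S\<close> top_mem_gens] U[of "n * N"] \<open>x \<in> T\<close> xy by simp
  qed
  moreover have "y < n * snd g + margin" if "g \<in> gens" "n * fst g + margin \<le> x" for g
  proof (rule ccontr)
    assume "\<not> ?thesis"
    then show False
      using not_mem_basis[OF \<open>(x, y) \<in> S\<close> that(1)] T[of "n * fst g"] U[of "n * snd g"] that(2) xy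
      by simp
  qed
  ultimately show "(x, y) \<in> staircase n margin"
    using \<open>N dvd x + y\<close> by (simp add: staircase_def less_height_iff)
qed

lemma S_inter_staircase_subset_basis: "S \<inter> staircase n 0 \<subseteq> basis n"
  by (force simp: basis_def staircase_def less_height_iff)

lemma staircase_subset: "staircase n c \<subseteq> {..<n * N + c} \<times> {..<n * N + c}"
  by (auto simp: staircase_def less_height_iff)

lemma finite_staircase: "finite (staircase n c)"
  using staircase_subset by (rule finite_subset) simp

lemma finite_basis: "finite (basis n)"
  using basis_subset_staircase finite_staircase by (rule finite_subset)

lemma card_basis_le: "card (basis n) \<le> card (staircase n margin)"
  using basis_subset_staircase finite_staircase by (rule card_mono[rotated])

lemma card_staircase_le: "card (staircase n 0) \<le> card (basis n) + margin * (n * N)"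
proof -
  let ?c1 = "n0 * (n0 + d)" and ?c2 = "N * d"
  have "staircase n 0 \<subseteq> basis n \<union> ({..<?c1} \<times> {..<n * N}) \<union> ({..<n * N} \<times> {..<?c2})"
  proof
    fix s assume "s \<in> staircase n 0"
    moreover obtain x y where [simp]: "s = (x, y)" by (cases s)
    ultimately have xy: "(x, y) \<in> staircase n 0" by simp
    then have "N dvd x + y" "x < n * N" "y < n * N"
      using staircase_subset[of n 0] by (auto simp: staircase_def)
    moreover have "(x, y) \<in> S \<or> x < ?c1 \<or> y < ?c2"
      using \<open>N dvd x + y\<close> mem_T_if_ge[of x] mem_U_if_ge[of y] by (auto simp: S_def not_less)
    ultimately show "s \<in> basis n \<union> ({..<?c1} \<times> {..<n * N}) \<union> ({..<n * N} \<times> {..<?c2})"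
      using xy S_inter_staircase_subset_basis by auto
  qed
  then have "card (staircase n 0) \<le> card (basis n \<union> ({..<?c1} \<times> {..<n * N}) \<union> ({..<n * N} \<times> {..<?c2}))"
    using finite_basis by (intro card_mono) auto
  also have "\<dots> \<le> card (basis n) + card ({..<?c1} \<times> {..<n * N}) + card ({..<n * N} \<times> {..<?c2})"
    by (rule order_trans[OF card_Un_le add_right_mono[OF card_Un_le]])
  finally show ?thesis
    by (simp add: margin_def algebra_simps)
qed

lemma height_below_first_step:
  assumes "x < n * n0 + c"
  shows "height n c x = n * N + c"
proof -
  have "(\<lambda>g. n * snd g + c) ` {g \<in> gens. n * fst g + c \<le> x} \<subseteq> {n * N + c}"
    using assms by (auto elim!: gens_cases simp: algebra_simps)
  then have "insert (n * N + c) ((\<lambda>g. n * snd g + c) ` {g \<in> gens. n * fst g + c \<le> x}) = {n * N + c}"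
    by blast
  then show ?thesis
    unfolding height_def by (metis Min_singleton)
qed

lemma height_on_step:
  assumes "i < p" and "n * (n0 + i * d) + c \<le> x" and "x < n * (n0 + Suc i * d) + c"
  shows "height n c x = n * ((p - i) * d) + c"
  unfolding height_def
proof (rule Min_eqI)
  show "finite (insert (n * N + c) ((\<lambda>g. n * snd g + c) ` {g \<in> gens. n * fst g + c \<le> x}))"
    using finite_gens by simp
  show "n * ((p - i) * d) + c \<in> insert (n * N + c) ((\<lambda>g. n * snd g + c) ` {g \<in> gens. n * fst g + c \<le> x})"
  proof (intro insertI2 image_eqI)
    show "(n0 + i * d, (p - i) * d) \<in> {g \<in> gens. n * fst g + c \<le> x}"
      using assms(1,2) step_mem_gens[of i] by simp
  qed simp
  have "(p - i) * d \<le> N" by (simp add: N_def mult_le_mono1 trans_le_add2)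
  then have below: "n * ((p - i) * d) \<le> n * N" by simp
  have above: "n * ((p - i) * d) \<le> n * snd g" if "g \<in> gens" "n * fst g + c \<le> x" for g
    using that(1)
  proof (cases rule: gens_cases)
    case (2 j)
    have "n * (j * d) < n * (Suc i * d)" using that(2) assms(3) 2 by (simp add: algebra_simps)
    then have "j * d < Suc i * d" by simp
    then have "j \<le> i" by (simp only: mult_less_cancel2) simp
    then show ?thesis using 2 by (simp add: diff_le_mono2)
  next
    case 1
    then show ?thesis using below by simp
  qed
  show "n * ((p - i) * d) + c \<le> h"
    if "h \<in> insert (n * N + c) ((\<lambda>g. n * snd g + c) ` {g \<in> gens. n * fst g + c \<le> x})" for h
  proof -
    from that consider "h = n * N + c" | g where "g \<in> gens" "n * fst g + c \<le> x" "h = n * snd g + c"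
      by blast
    then show ?thesis
    proof cases
      case 1
      then show ?thesis using below by simp
    next
      case 2
      then show ?thesis using above[OF 2(1,2)] by simp
    qed
  qed
qed

lemma sum_height_up_to_step:
  assumes "k \<le> p"
  shows "(\<Sum>x<n * (n0 + k * d) + c. height n c x)
    = (n * n0 + c) * (n * N + c) + (\<Sum>i<k. n * d * (n * ((p - i) * d) + c))"
  using assms
proof (induction k)
  case 0
  then show ?case by (simp add: height_below_first_step)
next
  case (Suc k)
  have "n * (n0 + k * d) + c \<le> n * (n0 + Suc k * d) + c" by simp
  then have "(\<Sum>x<n * (n0 + Suc k * d) + c. height n c x)
      = (\<Sum>x<n * (n0 + k * d) + c. height n c x)
        + (\<Sum>x\<in>{n * (n0 + k * d) + c..<n * (n0 + Suc k * d) + c}. height n c x)"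
    using sum.atLeastLessThan_concat[of 0 "n * (n0 + k * d) + c" "n * (n0 + Suc k * d) + c" "height n c"]
    by (simp add: atLeast0LessThan)
  also have "(\<Sum>x\<in>{n * (n0 + k * d) + c..<n * (n0 + Suc k * d) + c}. height n c x)
      = (\<Sum>x\<in>{n * (n0 + k * d) + c..<n * (n0 + Suc k * d) + c}. n * ((p - k) * d) + c)"
    using Suc.prems by (intro sum.cong) (auto intro!: height_on_step)
  also have "\<dots> = n * d * (n * ((p - k) * d) + c)"
    by (simp add: distrib_left)
  finally show ?case
    using Suc by simp
qed

lemma sum_height:
  "(\<Sum>x<n * N + c. height n c x) = (n * n0 + c) * (n * N + c) + (\<Sum>i<p. n * d * (n * ((p - i) * d) + c))"
  using sum_height_up_to_step[of p] by (simp add: N_def)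

definition e_HK :: real where "e_HK = real n0 + real (p * (p + 1) * d ^ 2) / (2 * real N)"

lemma sum_height_eq:
  "(\<Sum>x<n * N + c. real (height n c x)) = real N * e_HK * real n ^ 2 + real c * (2 * real n * real N + real c)"
proof -
  have "n * d * (n * ((p - i) * d) + c) = (n * d) ^ 2 * (p - i) + n * d * c" for i
    by (simp add: distrib_left power2_eq_square ac_simps)
  then have "(\<Sum>i<p. n * d * (n * ((p - i) * d) + c)) = (n * d) ^ 2 * (\<Sum>i<p. p - i) + p * (n * d * c)"
    by (simp add: sum.distrib sum_distrib_left)
  then have "2 * (\<Sum>i<p. n * d * (n * ((p - i) * d) + c))
      = (n * d) ^ 2 * (2 * (\<Sum>i<p. p - i)) + 2 * p * (n * d * c)"
    by (simp add: algebra_simps)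
  also have "\<dots> = (n * d) ^ 2 * (p * (p + 1)) + 2 * p * (n * d * c)"
    by (simp only: double_sum_lessThan_diff)
  finally have "2 * (\<Sum>x<n * N + c. height n c x)
      = 2 * (n0 * N * n ^ 2) + p * (p + 1) * d ^ 2 * n ^ 2 + 2 * (c * (2 * n * N + c))"
    unfolding sum_height by (simp add: N_def algebra_simps power2_eq_square)
  from arg_cong[OF this, of real]
  have "2 * real (\<Sum>x<n * N + c. height n c x) = 2 * (real n0 * real N * real n ^ 2)
      + real p * (real p + 1) * real d ^ 2 * real n ^ 2 + 2 * real (c * (2 * n * N + c))"
    by (simp add: algebra_simps)
  moreover have "real N * e_HK * real n ^ 2
      = real n0 * real N * real n ^ 2 + real p * (real p + 1) * real d ^ 2 * real n ^ 2 / 2"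
    using N_pos by (simp add: e_HK_def field_simps)
  ultimately have "real (\<Sum>x<n * N + c. height n c x) = real N * e_HK * real n ^ 2 + real (c * (2 * n * N + c))"
    by linarith
  then show ?thesis
    by simp
qed

lemma card_staircase:
  "card (staircase n c) = (\<Sum>x<n * N + c. card {y. y < height n c x \<and> N dvd (x + y)})"
proof -
  have "staircase n c = (SIGMA x:{..<n * N + c}. {y. y < height n c x \<and> N dvd (x + y)})"
    by (auto simp: staircase_def)
  then show ?thesis by (simp add: card_SigmaI)
qed

lemma sum_height_le_card_staircase:
  "(\<Sum>x<n * N + c. height n c x) \<le> N * card (staircase n c) + N * (n * N + c)"
proof -
  have "(\<Sum>x<n * N + c. height n c x) \<le> (\<Sum>x<n * N + c. N * card {y. y < height n c x \<and> N dvd (x + y)} + N)"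
    by (intro sum_mono less_imp_le card_residue_class_bounds(1)[OF N_pos])
  then show ?thesis
    by (simp add: card_staircase sum.distrib sum_distrib_left mult.commute)
qed

lemma card_staircase_le_sum_height:
  "N * card (staircase n c) \<le> (\<Sum>x<n * N + c. height n c x) + N * (n * N + c)"
proof -
  have "(\<Sum>x<n * N + c. N * card {y. y < height n c x \<and> N dvd (x + y)}) \<le> (\<Sum>x<n * N + c. height n c x + N)"
    by (intro sum_mono less_imp_le card_residue_class_bounds(2)[OF N_pos])
  then show ?thesis
    by (simp add: card_staircase sum.distrib sum_distrib_left mult.commute)
qed

lemma card_basis_upper:
  "real (card (basis n)) - e_HK * real n ^ 2
    \<le> (2 * real margin + real N) * real n + (real margin + real margin ^ 2 / real N)"
proof -
  have "N * card (basis n) \<le> (\<Sum>x<n * N + margin. height n margin x) + N * (n * N + margin)"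
    using mult_le_mono2[OF card_basis_le] card_staircase_le_sum_height le_trans by blast
  from of_nat_mono[OF this, where 'a = real]
  have "real N * real (card (basis n))
      \<le> real N * e_HK * real n ^ 2 + real margin * (2 * real n * real N + real margin)
        + real N * (real n * real N + real margin)"
    by (simp add: sum_height_eq)
  then have "real (card (basis n)) \<le> (real N * e_HK * real n ^ 2
      + real margin * (2 * real n * real N + real margin) + real N * (real n * real N + real margin)) / real N"
    using N_pos by (simp add: le_divide_eq mult.commute)
  also have "\<dots> = e_HK * real n ^ 2 + ((2 * real margin + real N) * real n + (real margin + real margin ^ 2 / real N))"
    using N_pos by (simp add: field_simps power2_eq_square)
  finally show ?thesis
    by simp
qed

lemma card_basis_lower:
  "e_HK * real n ^ 2 - real (card (basis n)) \<le> (real margin + 1) * real N * real n"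
proof -
  have "(\<Sum>x<n * N. height n 0 x) \<le> N * card (staircase n 0) + N * (n * N)"
    using sum_height_le_card_staircase[of n 0] by simp
  moreover have "N * card (staircase n 0) \<le> N * card (basis n) + N * (margin * (n * N))"
    using mult_le_mono2[OF card_staircase_le] by (simp add: add_mult_distrib2)
  ultimately have "(\<Sum>x<n * N. height n 0 x) \<le> N * card (basis n) + N * (margin * (n * N)) + N * (n * N)"
    by linarith
  from of_nat_mono[OF this, where 'a = real]
  have "real N * (e_HK * real n ^ 2) \<le> real N * (real (card (basis n)) + (real margin + 1) * real N * real n)"
    using sum_height_eq[of n 0] by (simp add: algebra_simps)
  then show ?thesis
    using N_pos by simp
qed

lemma card_basis_estimate:
  "\<bar>real (card (basis n)) - e_HK * real n ^ 2\<bar>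
    \<le> (2 * real margin + real N + (real margin + 1) * real N) * real n
      + (real margin + real margin ^ 2 / real N)"
proof (rule abs_leI)
  have "0 \<le> (real margin + 1) * real N * real n" "0 \<le> (2 * real margin + real N) * real n"
    "0 \<le> real margin + real margin ^ 2 / real N"
    by simp_all
  then show "real (card (basis n)) - e_HK * real n ^ 2
      \<le> (2 * real margin + real N + (real margin + 1) * real N) * real n
        + (real margin + real margin ^ 2 / real N)"
    and "- (real (card (basis n)) - e_HK * real n ^ 2)
      \<le> (2 * real margin + real N + (real margin + 1) * real N) * real n
        + (real margin + real margin ^ 2 / real N)"
    using card_basis_upper[of n] card_basis_lower[of n] unfolding distrib_right by linarith+
qed

lemma has_eHK2_gens: "has_eHK2 gens e_HK"
  unfolding has_eHK2_def hk_length_eq_card_basis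
  by (rule LIMSEQ_divide_square) (rule card_basis_estimate)

end

theorem corollary5p2:
  fixes n0 d p :: nat
  assumes "p \<ge> 1" and "n0 > 0" and "d > 0"
    and "Gcd ((\<lambda>i. n0 + i * d) ` {0..p}) = 1"
    and "minimally_generates ((\<lambda>i. n0 + i * d) ` {0..p})"
  shows "has_eHK2
           (insert (0, n0 + p * d)
              ((\<lambda>i. (n0 + i * d, (n0 + p * d) - (n0 + i * d))) ` {0..p}))
           (real n0 + real (p * (p + 1) * d ^ 2) / (2 * real (n0 + p * d)))"
proof -
  have "gcd n0 d dvd Gcd ((\<lambda>i. n0 + i * d) ` {0..p})"
    by (rule Gcd_greatest) auto
  then have "coprime n0 d"
    using assms(4) by (simp add: coprime_iff_gcd_eq_1)
  then interpret arith_seq_projective_closure n0 d p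
    using assms(1-3) by unfold_locales
  show ?thesis
    using has_eHK2_gens by (simp add: gens_def e_HK_def N_def)
qed

end
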